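(* Let $\mathcal{K}$ be a pointed closed convex cone in a finite-dimensional Euclidean space. Then for any face $\mathcal{F}$ of $\mathcal{K}$ with $\dim\mathcal{F}>1$ there exists $\beta>0$ such that for every $x\in\operatorname{span}\mathcal{F}$ and every $$y\in\operatorname*{Argmax}_{u\in\mathcal{F},\ \|u\|=1}\langle x,u\rangle$$ we have $$\operatorname{dist}(x+ty,\mathcal{K})\le\operatorname{dist}(x,\mathcal{K})\quad\text{and}\quad\operatorname{dist}(x,\mathcal{F})\le\beta\operatorname{dist}(x+ty,\mathcal{F})\quad\text{for all }t\ge0.$$
   Context: Pointed means $\mathcal{K}\cap(-\mathcal{K})=\{0\}$. A face of $\mathcal{K}$ is a closed convex subset $\mathcal{F}\subseteq\mathcal{K}$ such that whenever $x,y\in\mathcal{K}$ and $\alpha x+(1-\alpha)y\in\mathcal{F}$ for some $\alpha\in(0,1)$, then $x,y\in\mathcal{F}$. *)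

theory Defs
  imports "HOL-Analysis.Analysis"
begin

definition is_face :: "'a::real_normed_vector set \<Rightarrow> 'a set \<Rightarrow> bool" where
  "is_face K F \<longleftrightarrow> closed F \<and> convex F \<and> F \<subseteq> K \<and>
     (\<forall>x\<in>K. \<forall>y\<in>K. \<forall>\<alpha>::real. 0 < \<alpha> \<and> \<alpha> < 1 \<and> \<alpha> *\<^sub>R x + (1 - \<alpha>) *\<^sub>R y \<in> F \<longrightarrow> x \<in> F \<and> y \<in> F)"

definition pointed :: "'a::real_vector set \<Rightarrow> bool" where
  "pointed K \<longleftrightarrow> K \<inter> uminus ` K = {0}"

end

theory Submission
  imports Defs
begin

text \<open>A face F of a convex cone is itself a closed convex cone. Let y be a unit vector of F
  maximising \<open>\<langle>x, \<cdot>\<rangle>\<close> and \<open>m = \<langle>x, y\<rangle>\<close>. The residual \<open>v = x - m y\<close> lies in the polar cone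
  of F: if \<open>m > 0\<close> then \<open>m y\<close> is the projection of x onto F, and if \<open>m \<le> 0\<close> this follows from
  maximality directly. Since \<open>\<langle>x + t y, v\<rangle> = \<Vert>v\<Vert>\<^sup>2\<close>, the polar property gives
  \<open>\<Vert>v\<Vert> \<le> dist(x + t y, F)\<close>. On the other hand \<open>dist(x, F) \<le> \<Vert>v\<Vert>\<close> if \<open>m > 0\<close>, while if \<open>m \<le> 0\<close>
  two distinct unit vectors \<open>u\<^sub>1, u\<^sub>2\<close> of F give \<open>-m \<le> c \<Vert>x\<Vert>\<close> with \<open>c = \<Vert>u\<^sub>1 + u\<^sub>2\<Vert>/2 < 1\<close>,
  hence \<open>dist(x, F) \<le> \<Vert>x\<Vert> \<le> \<Vert>v\<Vert> / sqrt(1 - c\<^sup>2)\<close>. The estimate for K holds because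
  \<open>K + t y \<subseteq> K\<close>.\<close>

definition unit_argmax :: "'a::real_inner set \<Rightarrow> 'a \<Rightarrow> 'a \<Rightarrow> bool" where
  "unit_argmax F x y \<longleftrightarrow> y \<in> F \<and> norm y = 1 \<and> (\<forall>u\<in>F. norm u = 1 \<longrightarrow> inner x u \<le> inner x y)"

lemma is_faceD:
  assumes "is_face K F" "x \<in> K" "y \<in> K" "0 < \<alpha>" "\<alpha> < 1"
    and "\<alpha> *\<^sub>R x + (1 - \<alpha>) *\<^sub>R y \<in> F"
  shows "x \<in> F" "y \<in> F"
  using assms unfolding is_face_def by blast+

lemma face_of_convex_cone_contains_0:
  assumes "convex_cone K" "is_face K F" "F \<noteq> {}"
  shows "0 \<in> F"
proof -
  obtain f where "f \<in> F" using assms(3) by auto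
  then have twice: "2 *\<^sub>R f \<in> K" and mid: "(1/2) *\<^sub>R (2 *\<^sub>R f) + (1 - 1/2) *\<^sub>R 0 \<in> F"
    using assms(2) convex_cone_scaleR[OF assms(1)] unfolding is_face_def by auto
  show ?thesis
    using is_faceD(2)[OF assms(2) twice convex_cone_contains_0[OF assms(1)] _ _ mid] by simp
qed

lemma face_of_convex_cone_conic:
  assumes "convex_cone K" "is_face K F"
  shows "conic F"
  unfolding conic_def
proof (intro allI impI)
  fix x and c :: real
  assume x: "x \<in> F" and c: "0 \<le> c"
  have F0: "0 \<in> F" using face_of_convex_cone_contains_0[OF assms] x by blast
  show "c *\<^sub>R x \<in> F"
  proof (cases "c \<le> 1")
    case True
    then show ?thesis
      using convexD[of F x 0 c "1 - c"] assms(2) x F0 c unfolding is_face_def by simp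
  next
    case False
    \<comment> \<open>x lies strictly between 0 and c x, both of which are in K.\<close>
    have "(1/c) *\<^sub>R (c *\<^sub>R x) + (1 - 1/c) *\<^sub>R 0 \<in> F" using x False by simp
    moreover have "c *\<^sub>R x \<in> K"
      using x c convex_cone_scaleR[OF assms(1)] assms(2) unfolding is_face_def by blast
    moreover have "0 < 1/c" "1/c < 1" using False by auto
    ultimately show ?thesis
      using is_faceD(1)[OF assms(2)] convex_cone_contains_0[OF assms(1)] by blast
  qed
qed

lemma conic_aff_dim_gt_1_two_units:
  fixes F :: "'a::euclidean_space set"
  assumes "conic F" "aff_dim F > 1"
  obtains u1 u2 where "u1 \<in> F" "u2 \<in> F" "norm u1 = 1" "norm u2 = 1" "u1 \<noteq> u2"
proof -
  have normalise: "(1 / norm f) *\<^sub>R f \<in> F" if "f \<in> F" for f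
    using assms(1) that by (simp add: conicD)
  have "\<not> F \<subseteq> {0}"
    using aff_dim_subset[of F "{0}"] assms(2) by auto
  then obtain f where f: "f \<in> F" "f \<noteq> 0" by auto
  define u where "u = (1 / norm f) *\<^sub>R f"
  have u: "u \<in> F" "norm u = 1" using f normalise unfolding u_def by auto
  have "\<not> F \<subseteq> span {u}"
  proof
    assume "F \<subseteq> span {u}"
    then have "aff_dim F \<le> int (dim {u})"
      using aff_dim_subset aff_dim_subspace subspace_span by (metis dim_span)
    then show False using assms(2) by (simp split: if_splits)
  qed
  then obtain g where g: "g \<in> F" "g \<notin> span {u}" by auto
  then have "g \<noteq> 0" by (auto simp: span_zero)
  define w where "w = (1 / norm g) *\<^sub>R g"
  have w: "w \<in> F" "norm w = 1" using g \<open>g \<noteq> 0\<close> normalise unfolding w_def by auto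
  have "w \<noteq> u"
  proof
    assume "w = u"
    then have "g = norm g *\<^sub>R u" using \<open>g \<noteq> 0\<close> unfolding w_def by auto
    then show False using g(2) by (metis span_base span_mul singletonI)
  qed
  then show ?thesis using that u w by blast
qed

lemma norm_add_units_less_2:
  fixes u1 u2 :: "'a::real_inner"
  assumes "norm u1 = 1" "norm u2 = 1" "u1 \<noteq> u2"
  shows "norm (u1 + u2) < 2"
proof -
  have "norm (u1 + u2) \<noteq> 2"
    using norm_triangle_eq[of u1 u2] assms by auto
  then show ?thesis using norm_triangle_ineq[of u1 u2] assms by simp
qed

lemma infdist_add_convex_cone_le:
  fixes K :: "'a::real_normed_vector set"
  assumes "convex_cone K" "d \<in> K"
  shows "infdist (x + d) K \<le> infdist x K"
proof -
  have bound: "infdist (x + d) K \<le> dist x k" if "k \<in> K" for k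
  proof -
    have "k + d \<in> K" using convex_cone_add[OF assms(1) that assms(2)] .
    then have "infdist (x + d) K \<le> dist (x + d) (k + d)" by (rule infdist_le)
    then show ?thesis by (simp add: dist_norm)
  qed
  have "K \<noteq> {}" using assms(2) by auto
  then have "infdist (x + d) K \<le> (INF k\<in>K. dist x k)" using bound by (rule cINF_greatest)
  then show ?thesis using \<open>K \<noteq> {}\<close> by (simp add: infdist_notempty)
qed

lemma inner_le_norm_mult_infdist_polar:
  assumes "F \<noteq> {}" "\<And>f. f \<in> F \<Longrightarrow> inner v f \<le> 0"
  shows "inner z v \<le> norm v * infdist z F"
proof (cases "v = 0")
  case True
  then show ?thesis by simp
next
  case False
  have bound: "inner z v / norm v \<le> dist z a" if "a \<in> F" for a
  proof -
    have "inner z v \<le> inner z v - inner v a" using assms(2) that by auto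
    also have "\<dots> = inner (z - a) v" by (simp add: inner_diff_left inner_commute[of v a])
    also have "\<dots> \<le> norm (z - a) * norm v" by (rule norm_cauchy_schwarz)
    finally show ?thesis using False by (simp add: dist_norm divide_le_eq)
  qed
  have "inner z v / norm v \<le> (INF a\<in>F. dist z a)"
    using assms(1) bound by (simp add: cINF_greatest)
  then have "inner z v / norm v \<le> infdist z F" using assms(1) by (simp add: infdist_notempty)
  then show ?thesis using False by (simp add: divide_le_eq mult.commute)
qed

lemma closest_point_conic_polar:
  fixes F :: "'a::euclidean_space set" and x :: 'a
  assumes "closed F" "convex F" "conic F" "F \<noteq> {}"
  defines "p \<equiv> closest_point F x"
  shows "inner (x - p) p = 0" and "\<And>f. f \<in> F \<Longrightarrow> inner (x - p) f \<le> 0"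
proof -
  have pF: "p \<in> F" using closest_point_in_set[OF assms(1,4)] p_def by simp
  have dot: "inner (x - p) (z - p) \<le> 0" if "z \<in> F" for z
    using any_closest_point_dot[OF assms(2,1) pF that] closest_point_exists(2)[OF assms(1,4)]
    unfolding p_def by blast
  have "inner (x - p) (2 *\<^sub>R p - p) \<le> 0" using dot assms(3) pF by (simp add: conicD)
  moreover have "inner (x - p) (0 - p) \<le> 0" using dot assms(3,4) conic_contains_0 by blast
  ultimately show xpp: "inner (x - p) p = 0" by (simp add: algebra_simps)
  show "inner (x - p) f \<le> 0" if "f \<in> F" for f
    using dot[OF that] xpp by (simp add: inner_diff_right)
qed

lemma closest_point_conic_unit_argmax:
  fixes F :: "'a::euclidean_space set"
  assumes "closed F" "convex F" "conic F" "unit_argmax F x y" "inner x y > 0"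
  shows "closest_point F x = inner x y *\<^sub>R y"
proof -
  define m where "m = inner x y"
  define p where "p = closest_point F x"
  have yF: "y \<in> F" and ny: "norm y = 1"
    and ymax: "\<And>u. u \<in> F \<Longrightarrow> norm u = 1 \<Longrightarrow> inner x u \<le> m"
    using assms(4) unfolding unit_argmax_def m_def by auto
  have "F \<noteq> {}" using yF by auto
  note polar = closest_point_conic_polar[OF assms(1-3) this, where x = x, folded p_def]
  have pF: "p \<in> F" using closest_point_in_set[OF assms(1) \<open>F \<noteq> {}\<close>] p_def by simp
  have "p \<noteq> 0"
    using polar(2)[OF yF] assms(5) by (auto simp: inner_diff_left)
  then have "inner x ((1 / norm p) *\<^sub>R p) = norm p"
    using polar(1) by (simp add: inner_diff_left dot_square_norm power2_eq_square)
  moreover have "(1 / norm p) *\<^sub>R p \<in> F" using assms(3) pF by (simp add: conicD)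
  ultimately have "norm p \<le> m" using ymax \<open>p \<noteq> 0\<close> by force
  moreover have "m = inner (x - p) y + inner p y" unfolding m_def by (simp add: inner_diff_left)
  moreover have "inner (x - p) y \<le> 0" using polar(2)[OF yF] .
  moreover have "inner p y \<le> norm p" using norm_cauchy_schwarz[of p y] ny by simp
  ultimately have "inner p y = m" "norm p = m" by linarith+
  then have "norm p *\<^sub>R y = norm y *\<^sub>R p"
    using ny norm_cauchy_schwarz_eq[of p y] by simp
  then show ?thesis using \<open>norm p = m\<close> ny unfolding p_def m_def by (metis scaleR_one)
qed

lemma unit_argmax_residual_polar:
  fixes F :: "'a::euclidean_space set"
  assumes "closed F" "convex F" "conic F" "unit_argmax F x y" "f \<in> F"
  shows "inner (x - inner x y *\<^sub>R y) f \<le> 0"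
proof (cases "inner x y > 0")
  case True
  have "F \<noteq> {}" using assms(5) by auto
  then have "inner (x - closest_point F x) f \<le> 0"
    by (rule closest_point_conic_polar(2)[OF assms(1-3) _ assms(5)])
  then show ?thesis using closest_point_conic_unit_argmax[OF assms(1-4) True] by simp
next
  case False
  define m where "m = inner x y"
  have ny: "norm y = 1" and ymax: "\<And>u. u \<in> F \<Longrightarrow> norm u = 1 \<Longrightarrow> inner x u \<le> m"
    using assms(4) unfolding unit_argmax_def m_def by auto
  show ?thesis
  proof (cases "f = 0")
    case False
    define w where "w = (1 / norm f) *\<^sub>R f"
    have "w \<in> F" "norm w = 1" using assms(3,5) False unfolding w_def by (auto simp: conicD)
    then have "inner x w \<le> m" "inner y w \<le> 1"
      using ymax norm_cauchy_schwarz[of y w] ny by auto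
    moreover have "m * (1 - inner y w) \<le> 0"
      using \<open>\<not> inner x y > 0\<close> \<open>inner y w \<le> 1\<close> unfolding m_def
      by (simp add: mult_nonpos_nonneg)
    ultimately have "inner (x - m *\<^sub>R y) w \<le> 0"
      by (simp add: inner_diff_left right_diff_distrib)
    moreover have "f = norm f *\<^sub>R w" using False unfolding w_def by simp
    ultimately show ?thesis
      unfolding m_def by (metis inner_scaleR_right mult_nonneg_nonpos norm_ge_zero)
  qed simp
qed

lemma norm_residual_le_infdist:
  fixes F :: "'a::euclidean_space set"
  assumes "closed F" "convex F" "conic F" "unit_argmax F x y"
  shows "norm (x - inner x y *\<^sub>R y) \<le> infdist (x + t *\<^sub>R y) F"
proof -
  define v where "v = x - inner x y *\<^sub>R y"
  have "inner y y = 1" using assms(4) by (simp add: unit_argmax_def dot_square_norm)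
  then have "inner (x + t *\<^sub>R y) v = norm v ^ 2"
    unfolding v_def power2_norm_eq_inner
    by (simp add: inner_add_left inner_diff_left inner_diff_right inner_commute[of y x]
        algebra_simps)
  moreover have "inner (x + t *\<^sub>R y) v \<le> norm v * infdist (x + t *\<^sub>R y) F"
    unfolding v_def
    by (rule inner_le_norm_mult_infdist_polar[OF _ unit_argmax_residual_polar[OF assms]])
      (use assms(4) in \<open>auto simp: unit_argmax_def\<close>)
  ultimately have "norm v ^ 2 \<le> norm v * infdist (x + t *\<^sub>R y) F" by simp
  then show ?thesis
    unfolding v_def[symmetric] by (cases "v = 0") (auto simp: power2_eq_square infdist_nonneg)
qed

lemma neg_le_norm_mean_mult_norm:
  fixes x u1 u2 :: "'a::real_inner"
  assumes "inner x u1 \<le> m" "inner x u2 \<le> m"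
  shows "- m \<le> norm (u1 + u2) / 2 * norm x"
proof -
  have "- (norm x * norm (u1 + u2)) \<le> inner x (u1 + u2)"
    using Cauchy_Schwarz_ineq2[of x "u1 + u2"] by linarith
  also have "\<dots> \<le> 2 * m" using assms by (simp add: inner_add_right)
  finally show ?thesis by (simp add: mult.commute)
qed

lemma sqrt_mult_infdist_le_norm_residual:
  fixes F :: "'a::real_inner set"
  assumes "conic F" "unit_argmax F x y"
    and u: "u1 \<in> F" "u2 \<in> F" "norm u1 = 1" "norm u2 = 1"
  defines "c \<equiv> norm (u1 + u2) / 2"
  shows "sqrt (1 - c\<^sup>2) * infdist x F \<le> norm (x - inner x y *\<^sub>R y)"
proof -
  define m where "m = inner x y"
  have c: "0 \<le> c" "c \<le> 1"
    using norm_triangle_ineq[of u1 u2] u unfolding c_def by auto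
  then have c2: "0 \<le> 1 - c\<^sup>2" "1 - c\<^sup>2 \<le> 1" by (auto simp: power_le_one)
  have yF: "y \<in> F" and "inner y y = 1"
    and ymax: "\<And>u. u \<in> F \<Longrightarrow> norm u = 1 \<Longrightarrow> inner x u \<le> m"
    using assms(2) unfolding unit_argmax_def m_def by (auto simp: dot_square_norm)
  then have nv: "norm (x - m *\<^sub>R y) ^ 2 = norm x ^ 2 - m\<^sup>2"
    unfolding power2_norm_eq_inner m_def
    by (simp add: inner_diff_left inner_diff_right inner_commute[of y x] power2_eq_square)
  have "(1 - c\<^sup>2) * infdist x F ^ 2 \<le> norm (x - m *\<^sub>R y) ^ 2"
  proof (cases "m > 0")
    case True
    have "m *\<^sub>R y \<in> F" using assms(1) yF True by (simp add: conicD)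
    then have "infdist x F \<le> norm (x - m *\<^sub>R y)" using infdist_le by (metis dist_norm)
    then have "infdist x F ^ 2 \<le> norm (x - m *\<^sub>R y) ^ 2"
      using infdist_nonneg power_mono by blast
    moreover have "(1 - c\<^sup>2) * infdist x F ^ 2 \<le> infdist x F ^ 2"
      using c2 by (simp add: mult_left_le_one_le)
    ultimately show ?thesis by linarith
  next
    case False
    have "- m \<le> c * norm x"
      unfolding c_def by (rule neg_le_norm_mean_mult_norm[OF ymax[OF u(1,3)] ymax[OF u(2,4)]])
    then have m2: "m\<^sup>2 \<le> c\<^sup>2 * norm x ^ 2"
      using False power_mono[of "- m" "c * norm x" 2] by (simp add: power_mult_distrib)
    have "infdist x F \<le> norm x"
      using infdist_le[of 0 F x] assms(1) yF conic_contains_0 by auto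
    then have "infdist x F ^ 2 \<le> norm x ^ 2" using infdist_nonneg power_mono by blast
    then have "(1 - c\<^sup>2) * infdist x F ^ 2 \<le> (1 - c\<^sup>2) * norm x ^ 2"
      using c2 by (simp add: mult_left_mono)
    also have "\<dots> \<le> norm x ^ 2 - m\<^sup>2" using m2 by (simp add: algebra_simps)
    finally show ?thesis using nv by simp
  qed
  then have "(sqrt (1 - c\<^sup>2) * infdist x F) ^ 2 \<le> norm (x - m *\<^sub>R y) ^ 2"
    using c2 by (simp add: power_mult_distrib)
  then show ?thesis unfolding m_def by (rule power2_le_imp_le) simp
qed

theorem proposition4p4:
  fixes K F :: "'a::euclidean_space set"
  assumes "convex_cone K" and "closed K" and "pointed K"
    and "is_face K F" and "aff_dim F > 1"
  shows "\<exists>\<beta>>0. \<forall>x\<in>span F. \<forall>y.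
           (y \<in> F \<and> norm y = 1 \<and> (\<forall>u\<in>F. norm u = 1 \<longrightarrow> inner x u \<le> inner x y)) \<longrightarrow>
           (\<forall>t::real. t \<ge> 0 \<longrightarrow>
              infdist (x + t *\<^sub>R y) K \<le> infdist x K \<and>
              infdist x F \<le> \<beta> * infdist (x + t *\<^sub>R y) F)"
proof -
  have F: "closed F" "convex F" "F \<subseteq> K" using assms(4) by (auto simp: is_face_def)
  have conicF: "conic F" using face_of_convex_cone_conic[OF assms(1,4)] .
  obtain u1 u2 where u: "u1 \<in> F" "u2 \<in> F" "norm u1 = 1" "norm u2 = 1" "u1 \<noteq> u2"
    using conic_aff_dim_gt_1_two_units[OF conicF assms(5)] .
  define c where "c = norm (u1 + u2) / 2"
  have "c\<^sup>2 < 1"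
    using norm_add_units_less_2[OF u(3-5)] unfolding c_def by (simp add: abs_square_less_1)
  define \<beta> where "\<beta> = 1 / sqrt (1 - c\<^sup>2)"
  have "\<beta> > 0" using \<open>c\<^sup>2 < 1\<close> unfolding \<beta>_def by simp
  moreover have
    "infdist (x + t *\<^sub>R y) K \<le> infdist x K \<and> infdist x F \<le> \<beta> * infdist (x + t *\<^sub>R y) F"
    if "unit_argmax F x y" "t \<ge> 0" for x y and t :: real
  proof
    have "t *\<^sub>R y \<in> K" using that conicF F(3) by (auto simp: unit_argmax_def conicD)
    then show "infdist (x + t *\<^sub>R y) K \<le> infdist x K"
      using infdist_add_convex_cone_le[OF assms(1)] by blast
    show "infdist x F \<le> \<beta> * infdist (x + t *\<^sub>R y) F"
      using sqrt_mult_infdist_le_norm_residual[OF conicF that(1) u(1-4), folded c_def]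
        norm_residual_le_infdist[OF F(1,2) conicF that(1), of t] \<open>c\<^sup>2 < 1\<close>
      unfolding \<beta>_def by (simp add: field_simps)
  qed
  ultimately show ?thesis unfolding unit_argmax_def by blast
qed

end
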